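(* Let $X_1,\dots,X_n$ be independent random variables, each symmetric about $0$. If $|X_k|\le_{\mathrm{st}}|X_l|$ for some pair $1\le k<l\le n$, then $$|\max(X_i\mid 1\le i\le n,\ i\ne l)|\le_{\mathrm{st}}|\max(X_i\mid 1\le i\le n)|,$$ $$|\min(X_i\mid 1\le i\le n,\ i\ne l)|\le_{\mathrm{st}}|\min(X_i\mid 1\le i\le n)|,$$ and if $|X_k|<_{\mathrm{st}}|X_l|$ both stochastic inequalities are strict. Consequently, if $|X_1|\le_{\mathrm{st}}\cdots\le_{\mathrm{st}}|X_n|$ then $(X_1,\dots,X_n)$ is SIAMX and SIAMN, and if $|X_1|<_{\mathrm{st}}\cdots<_{\mathrm{st}}|X_n|$ then $(X_1,\dots,X_n)$ is SSIAMX and SSIAMN.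
   Context: For random variables $U,V$, $U\le_{\mathrm{st}}V$ means $F_U(x)\ge F_V(x)$ for all real $x$ ($F$ the cdf), and $U<_{\mathrm{st}}V$ means additionally strict inequality for at least one $x$. $(X_1,\dots,X_n)$ is SIAMX if $|\max(X_1,\dots,X_{l-1})|\le_{\mathrm{st}}|\max(X_1,\dots,X_l)|$ for $l=2,\dots,n$ (with $\max(X_1)=X_1$), and SSIAMX if all these inequalities are strict; SIAMN and SSIAMN are the same with $\max$ replaced by $\min$. *)

theory Defs
  imports "HOL-Probability.Probability"
begin

definition stoch_le :: "'a measure \<Rightarrow> ('a \<Rightarrow> real) \<Rightarrow> ('a \<Rightarrow> real) \<Rightarrow> bool" where
  "stoch_le M U V \<longleftrightarrow>
     (\<forall>x::real. measure M {\<omega>\<in>space M. V \<omega> \<le> x} \<le> measure M {\<omega>\<in>space M. U \<omega> \<le> x})"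

definition stoch_lt :: "'a measure \<Rightarrow> ('a \<Rightarrow> real) \<Rightarrow> ('a \<Rightarrow> real) \<Rightarrow> bool" where
  "stoch_lt M U V \<longleftrightarrow> stoch_le M U V \<and>
     (\<exists>x::real. measure M {\<omega>\<in>space M. V \<omega> \<le> x} < measure M {\<omega>\<in>space M. U \<omega> \<le> x})"

definition abs_max :: "(nat \<Rightarrow> 'a \<Rightarrow> real) \<Rightarrow> nat set \<Rightarrow> 'a \<Rightarrow> real" where
  "abs_max X I = (\<lambda>\<omega>. \<bar>Max ((\<lambda>i. X i \<omega>) ` I)\<bar>)"

definition abs_min :: "(nat \<Rightarrow> 'a \<Rightarrow> real) \<Rightarrow> nat set \<Rightarrow> 'a \<Rightarrow> real" where
  "abs_min X I = (\<lambda>\<omega>. \<bar>Min ((\<lambda>i. X i \<omega>) ` I)\<bar>)"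

definition SIAMX :: "'a measure \<Rightarrow> (nat \<Rightarrow> 'a \<Rightarrow> real) \<Rightarrow> nat \<Rightarrow> bool" where
  "SIAMX M X n \<longleftrightarrow> (\<forall>l\<in>{2..n}. stoch_le M (abs_max X {1..l-1}) (abs_max X {1..l}))"

definition SSIAMX :: "'a measure \<Rightarrow> (nat \<Rightarrow> 'a \<Rightarrow> real) \<Rightarrow> nat \<Rightarrow> bool" where
  "SSIAMX M X n \<longleftrightarrow> (\<forall>l\<in>{2..n}. stoch_lt M (abs_max X {1..l-1}) (abs_max X {1..l}))"

definition SIAMN :: "'a measure \<Rightarrow> (nat \<Rightarrow> 'a \<Rightarrow> real) \<Rightarrow> nat \<Rightarrow> bool" where
  "SIAMN M X n \<longleftrightarrow> (\<forall>l\<in>{2..n}. stoch_le M (abs_min X {1..l-1}) (abs_min X {1..l}))"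

definition SSIAMN :: "'a measure \<Rightarrow> (nat \<Rightarrow> 'a \<Rightarrow> real) \<Rightarrow> nat \<Rightarrow> bool" where
  "SSIAMN M X n \<longleftrightarrow> (\<forall>l\<in>{2..n}. stoch_lt M (abs_min X {1..l-1}) (abs_min X {1..l}))"

end

theory Submission imports Defs begin

text \<open>
  Write F i x = P(X i \<le> x). For symmetric X i and x \<ge> 0 one has P(X i < -x) = 1 - F i x, hence
  F i x \<ge> 1/2 and P(|X i| \<le> x) = 2 F i x - 1. Since |max X i| \<le> x means that every X i \<le> x but
  not every X i < -x, independence gives P(|max X i| \<le> x) = \<Prod>i. F i x - \<Prod>i. (1 - F i x), and
  the mirror argument gives the same formula for |min X i|. Removing an index l raises this quantity
  by at least (\<Prod>i \<noteq> k, l. F i x) * (F k x - F l x) for any other index k, and |X k| \<le>st |X l|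
  says exactly that F l x \<le> F k x for all x \<ge> 0.
\<close>

lemma prod_minus_prod_compl_remove_ge:
  fixes F :: "nat \<Rightarrow> real"
  assumes I: "finite I" "k \<in> I" "l \<in> I" "k \<noteq> l"
    and F: "\<And>i. i \<in> I \<Longrightarrow> 1/2 \<le> F i \<and> F i \<le> 1"
  shows "(\<Prod>i\<in>I-{k,l}. F i) * (F k - F l)
    \<le> ((\<Prod>i\<in>I-{l}. F i) - (\<Prod>i\<in>I-{l}. 1 - F i)) - ((\<Prod>i\<in>I. F i) - (\<Prod>i\<in>I. 1 - F i))"
proof -
  define Q where "Q = (\<Prod>i\<in>I-{k,l}. F i)"
  define R where "R = (\<Prod>i\<in>I-{k,l}. 1 - F i)"
  have RQ: "R \<le> Q" unfolding R_def Q_def using F by (intro prod_mono) force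
  have split_l: "(\<Prod>i\<in>I. G i) = G l * (\<Prod>i\<in>I-{l}. G i)" for G :: "nat \<Rightarrow> real"
    using prod.remove[OF I(1,3)] .
  have split_k: "(\<Prod>i\<in>I-{l}. G i) = G k * (\<Prod>i\<in>I-{k,l}. G i)" for G :: "nat \<Rightarrow> real"
  proof -
    have "I - {l} - {k} = I - {k,l}" by auto
    then show ?thesis using prod.remove[of "I-{l}" k G] I by simp
  qed
  have "0 \<le> (1 - F k) * F l"
    using F[OF I(2)] F[OF I(3)] by (intro mult_nonneg_nonneg) auto
  then have "R * ((1 - F k) * F l) \<le> Q * ((1 - F k) * F l)"
    by (rule mult_right_mono[OF RQ])
  then show ?thesis
    unfolding split_l split_k Q_def[symmetric] R_def[symmetric] by (simp add: algebra_simps)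
qed

lemma measure_abs_le_negative:
  fixes f :: "'a \<Rightarrow> real"
  assumes "x < 0"
  shows "measure M {\<omega>\<in>space M. \<bar>f \<omega>\<bar> \<le> x} = 0"
proof -
  have "{\<omega>\<in>space M. \<bar>f \<omega>\<bar> \<le> x} = {}" using assms by auto
  then show ?thesis by (metis measure_empty)
qed

context prob_space
begin

lemma prob_le_neg_le_eq_prob_le:
  fixes X :: "'a \<Rightarrow> real"
  assumes "X \<in> borel_measurable M" "distr M borel X = distr M borel (\<lambda>\<omega>. - X \<omega>)"
  shows "prob {\<omega>\<in>space M. - x \<le> X \<omega>} = prob {\<omega>\<in>space M. X \<omega> \<le> x}"
proof -
  have "prob {\<omega>\<in>space M. X \<omega> \<le> x} = measure (distr M borel X) {..x}"
    using assms by (subst measure_distr) (auto intro!: arg_cong[where f=prob])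
  also have "\<dots> = measure (distr M borel (\<lambda>\<omega>. - X \<omega>)) {..x}"
    using assms by simp
  also have "\<dots> = prob {\<omega>\<in>space M. - x \<le> X \<omega>}"
    using assms by (subst measure_distr) (auto intro!: arg_cong[where f=prob])
  finally show ?thesis by simp
qed

lemma prob_less_neg_eq_1_minus_prob_le:
  fixes X :: "'a \<Rightarrow> real"
  assumes "X \<in> borel_measurable M" "distr M borel X = distr M borel (\<lambda>\<omega>. - X \<omega>)"
  shows "prob {\<omega>\<in>space M. X \<omega> < - x} = 1 - prob {\<omega>\<in>space M. X \<omega> \<le> x}"
proof -
  have "{\<omega>\<in>space M. X \<omega> < - x} = space M - {\<omega>\<in>space M. - x \<le> X \<omega>}" by auto
  then show ?thesis
    using assms by (simp add: prob_compl prob_le_neg_le_eq_prob_le)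
qed

lemma prob_greater_eq_1_minus_prob_le:
  fixes X :: "'a \<Rightarrow> real"
  assumes "X \<in> borel_measurable M"
  shows "prob {\<omega>\<in>space M. x < X \<omega>} = 1 - prob {\<omega>\<in>space M. X \<omega> \<le> x}"
proof -
  have "{\<omega>\<in>space M. x < X \<omega>} = space M - {\<omega>\<in>space M. X \<omega> \<le> x}" by auto
  then show ?thesis using assms by (simp add: prob_compl)
qed

lemma prob_symmetric_le_ge_half:
  fixes X :: "'a \<Rightarrow> real"
  assumes "X \<in> borel_measurable M" "distr M borel X = distr M borel (\<lambda>\<omega>. - X \<omega>)" "0 \<le> x"
  shows "1/2 \<le> prob {\<omega>\<in>space M. X \<omega> \<le> x}"
proof -
  have "prob {\<omega>\<in>space M. X \<omega> < - x} \<le> prob {\<omega>\<in>space M. X \<omega> \<le> x}"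
    using assms by (intro finite_measure_mono) auto
  then show ?thesis using prob_less_neg_eq_1_minus_prob_le[OF assms(1,2)] by simp
qed

lemma prob_indep_vars_all_in:
  assumes "indep_vars (\<lambda>_. borel) X I" "finite J" "J \<subseteq> I"
    and "\<And>i. i \<in> J \<Longrightarrow> A i \<in> sets borel"
  shows "prob {\<omega>\<in>space M. \<forall>i\<in>J. X i \<omega> \<in> A i} = (\<Prod>i\<in>J. prob {\<omega>\<in>space M. X i \<omega> \<in> A i})"
proof (cases "J = {}")
  case True
  then show ?thesis by (simp add: prob_space)
next
  case False
  have "{\<omega>\<in>space M. \<forall>i\<in>J. X i \<omega> \<in> A i} = (\<Inter>i\<in>J. X i -` A i \<inter> space M)"
    using False by auto
  moreover have "{\<omega>\<in>space M. X i \<omega> \<in> A i} = X i -` A i \<inter> space M" for i by auto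
  ultimately show ?thesis using indep_varsD[OF assms(1) False assms(2-4)] by simp
qed

lemma prob_abs_Max_le:
  fixes X :: "'i \<Rightarrow> 'a \<Rightarrow> real"
  assumes indep: "indep_vars (\<lambda>_. borel) X I" and J: "finite J" "J \<subseteq> I" "J \<noteq> {}"
    and symm: "\<And>i. i \<in> I \<Longrightarrow> distr M borel (X i) = distr M borel (\<lambda>\<omega>. - X i \<omega>)"
    and "0 \<le> x"
  shows "prob {\<omega>\<in>space M. \<bar>Max ((\<lambda>i. X i \<omega>) ` J)\<bar> \<le> x}
     = (\<Prod>i\<in>J. prob {\<omega>\<in>space M. X i \<omega> \<le> x}) - (\<Prod>i\<in>J. 1 - prob {\<omega>\<in>space M. X i \<omega> \<le> x})"
proof -
  have rv: "X i \<in> borel_measurable M" if "i \<in> J" for i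
    using indep J that unfolding indep_vars_def by auto
  let ?A = "{\<omega>\<in>space M. \<forall>i\<in>J. X i \<omega> \<in> {..x}}"
  let ?B = "{\<omega>\<in>space M. \<forall>i\<in>J. X i \<omega> \<in> {..< -x}}"
  have abs_le: "\<bar>m\<bar> \<le> x \<longleftrightarrow> m \<le> x \<and> \<not> m < -x" for m :: real by auto
  have "{\<omega>\<in>space M. \<bar>Max ((\<lambda>i. X i \<omega>) ` J)\<bar> \<le> x} = ?A - ?B"
    using J \<open>0 \<le> x\<close> unfolding abs_le by (auto simp: Max_le_iff Max_less_iff)
  moreover have "?A \<in> sets M" "?B \<in> sets M" using rv J by measurable
  moreover have "?B \<subseteq> ?A" using \<open>0 \<le> x\<close> by auto
  moreover have "prob ?A = (\<Prod>i\<in>J. prob {\<omega>\<in>space M. X i \<omega> \<le> x})"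
    using prob_indep_vars_all_in[OF indep J(1,2), of "\<lambda>_. {..x}"] by simp
  moreover have "prob ?B = (\<Prod>i\<in>J. 1 - prob {\<omega>\<in>space M. X i \<omega> \<le> x})"
    using prob_indep_vars_all_in[OF indep J(1,2), of "\<lambda>_. {..< -x}"] J(2)
    by (simp add: prob_less_neg_eq_1_minus_prob_le[OF rv symm] subset_iff cong: prod.cong)
  ultimately show ?thesis by (simp add: finite_measure_Diff)
qed

lemma prob_abs_Min_le:
  fixes X :: "'i \<Rightarrow> 'a \<Rightarrow> real"
  assumes indep: "indep_vars (\<lambda>_. borel) X I" and J: "finite J" "J \<subseteq> I" "J \<noteq> {}"
    and symm: "\<And>i. i \<in> I \<Longrightarrow> distr M borel (X i) = distr M borel (\<lambda>\<omega>. - X i \<omega>)"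
    and "0 \<le> x"
  shows "prob {\<omega>\<in>space M. \<bar>Min ((\<lambda>i. X i \<omega>) ` J)\<bar> \<le> x}
     = (\<Prod>i\<in>J. prob {\<omega>\<in>space M. X i \<omega> \<le> x}) - (\<Prod>i\<in>J. 1 - prob {\<omega>\<in>space M. X i \<omega> \<le> x})"
proof -
  have rv: "X i \<in> borel_measurable M" if "i \<in> J" for i
    using indep J that unfolding indep_vars_def by auto
  let ?A = "{\<omega>\<in>space M. \<forall>i\<in>J. X i \<omega> \<in> {-x..}}"
  let ?B = "{\<omega>\<in>space M. \<forall>i\<in>J. X i \<omega> \<in> {x<..}}"
  have abs_le: "\<bar>m\<bar> \<le> x \<longleftrightarrow> -x \<le> m \<and> \<not> x < m" for m :: real by auto
  have "{\<omega>\<in>space M. \<bar>Min ((\<lambda>i. X i \<omega>) ` J)\<bar> \<le> x} = ?A - ?B"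
    using J \<open>0 \<le> x\<close> unfolding abs_le by (auto simp: Min_ge_iff Min_gr_iff)
  moreover have "?A \<in> sets M" "?B \<in> sets M" using rv J by measurable
  moreover have "?B \<subseteq> ?A" using \<open>0 \<le> x\<close> by auto
  moreover have "prob ?A = (\<Prod>i\<in>J. prob {\<omega>\<in>space M. X i \<omega> \<le> x})"
    using prob_indep_vars_all_in[OF indep J(1,2), of "\<lambda>_. {-x..}"] J(2)
    by (simp add: prob_le_neg_le_eq_prob_le[OF rv symm] subset_iff cong: prod.cong)
  moreover have "prob ?B = (\<Prod>i\<in>J. 1 - prob {\<omega>\<in>space M. X i \<omega> \<le> x})"
    using prob_indep_vars_all_in[OF indep J(1,2), of "\<lambda>_. {x<..}"] J(2)
    by (simp add: prob_greater_eq_1_minus_prob_le[OF rv] subset_iff cong: prod.cong)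
  ultimately show ?thesis by (simp add: finite_measure_Diff)
qed

lemma prob_abs_le_symmetric:
  fixes X :: "'a \<Rightarrow> real"
  assumes "X \<in> borel_measurable M" "distr M borel X = distr M borel (\<lambda>\<omega>. - X \<omega>)" "0 \<le> x"
  shows "prob {\<omega>\<in>space M. \<bar>X \<omega>\<bar> \<le> x} = 2 * prob {\<omega>\<in>space M. X \<omega> \<le> x} - 1"
proof -
  have "{\<omega>\<in>space M. \<bar>X \<omega>\<bar> \<le> x} = {\<omega>\<in>space M. X \<omega> \<le> x} - {\<omega>\<in>space M. X \<omega> < - x}"
    using assms(3) by auto
  moreover have "{\<omega>\<in>space M. X \<omega> < - x} \<subseteq> {\<omega>\<in>space M. X \<omega> \<le> x}"
    using assms(3) by auto
  ultimately show ?thesis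
    using assms by (simp add: finite_measure_Diff prob_less_neg_eq_1_minus_prob_le)
qed

lemma prob_abs_max_abs_min_remove_gap:
  fixes X :: "nat \<Rightarrow> 'a \<Rightarrow> real"
  assumes indep: "indep_vars (\<lambda>_. borel) X I" and I: "finite I" "k \<in> I" "l \<in> I" "k \<noteq> l"
    and symm: "\<And>i. i \<in> I \<Longrightarrow> distr M borel (X i) = distr M borel (\<lambda>\<omega>. - X i \<omega>)"
    and "0 \<le> x"
  obtains c :: real where "0 < c"
    and "c * (prob {\<omega>\<in>space M. \<bar>X k \<omega>\<bar> \<le> x} - prob {\<omega>\<in>space M. \<bar>X l \<omega>\<bar> \<le> x})
      \<le> prob {\<omega>\<in>space M. abs_max X (I - {l}) \<omega> \<le> x} - prob {\<omega>\<in>space M. abs_max X I \<omega> \<le> x}"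
    and "c * (prob {\<omega>\<in>space M. \<bar>X k \<omega>\<bar> \<le> x} - prob {\<omega>\<in>space M. \<bar>X l \<omega>\<bar> \<le> x})
      \<le> prob {\<omega>\<in>space M. abs_min X (I - {l}) \<omega> \<le> x} - prob {\<omega>\<in>space M. abs_min X I \<omega> \<le> x}"
proof -
  define F where "F i = prob {\<omega>\<in>space M. X i \<omega> \<le> x}" for i
  have rv: "X i \<in> borel_measurable M" if "i \<in> I" for i
    using indep that unfolding indep_vars_def by auto
  have F_bounds: "1/2 \<le> F i \<and> F i \<le> 1" if "i \<in> I" for i
    unfolding F_def using prob_symmetric_le_ge_half[OF rv symm \<open>0 \<le> x\<close>] that by simp
  have abs_cdf: "prob {\<omega>\<in>space M. \<bar>X i \<omega>\<bar> \<le> x} = 2 * F i - 1" if "i \<in> I" for i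
    unfolding F_def using prob_abs_le_symmetric[OF rv symm \<open>0 \<le> x\<close>] that by simp
  have nonempty: "I \<noteq> {}" "I - {l} \<noteq> {}" using I by auto
  have "(\<Prod>i\<in>I-{k,l}. F i) * (F k - F l)
    \<le> ((\<Prod>i\<in>I-{l}. F i) - (\<Prod>i\<in>I-{l}. 1 - F i)) - ((\<Prod>i\<in>I. F i) - (\<Prod>i\<in>I. 1 - F i))"
    using F_bounds by (rule prod_minus_prod_compl_remove_ge[OF I])
  moreover have "0 < (\<Prod>i\<in>I-{k,l}. F i)"
    using F_bounds by (intro prod_pos) force
  ultimately show ?thesis
    using that[of "(\<Prod>i\<in>I-{k,l}. F i) / 2"] abs_cdf[OF I(2)] abs_cdf[OF I(3)]
      prob_abs_Max_le[OF indep _ _ nonempty(1) symm \<open>0 \<le> x\<close>]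
      prob_abs_Max_le[OF indep _ _ nonempty(2) symm \<open>0 \<le> x\<close>]
      prob_abs_Min_le[OF indep _ _ nonempty(1) symm \<open>0 \<le> x\<close>]
      prob_abs_Min_le[OF indep _ _ nonempty(2) symm \<open>0 \<le> x\<close>] I(1)
    unfolding abs_max_def abs_min_def F_def by (auto simp: algebra_simps)
qed

lemma stoch_le_abs_max_abs_min_remove:
  fixes X :: "nat \<Rightarrow> 'a \<Rightarrow> real"
  assumes indep: "indep_vars (\<lambda>_. borel) X I" and I: "finite I" "k \<in> I" "l \<in> I" "k \<noteq> l"
    and symm: "\<And>i. i \<in> I \<Longrightarrow> distr M borel (X i) = distr M borel (\<lambda>\<omega>. - X i \<omega>)"
    and kl: "stoch_le M (\<lambda>\<omega>. \<bar>X k \<omega>\<bar>) (\<lambda>\<omega>. \<bar>X l \<omega>\<bar>)"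
  shows "stoch_le M (abs_max X (I - {l})) (abs_max X I) \<and> stoch_le M (abs_min X (I - {l})) (abs_min X I)"
  unfolding stoch_le_def
proof (intro conjI allI)
  fix x :: real
  have "prob {\<omega>\<in>space M. abs_max X I \<omega> \<le> x} \<le> prob {\<omega>\<in>space M. abs_max X (I - {l}) \<omega> \<le> x}
    \<and> prob {\<omega>\<in>space M. abs_min X I \<omega> \<le> x} \<le> prob {\<omega>\<in>space M. abs_min X (I - {l}) \<omega> \<le> x}"
  proof (cases "0 \<le> x")
    case True
    obtain c where "0 < c"
      and "c * (prob {\<omega>\<in>space M. \<bar>X k \<omega>\<bar> \<le> x} - prob {\<omega>\<in>space M. \<bar>X l \<omega>\<bar> \<le> x})
        \<le> prob {\<omega>\<in>space M. abs_max X (I - {l}) \<omega> \<le> x} - prob {\<omega>\<in>space M. abs_max X I \<omega> \<le> x}"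
      and "c * (prob {\<omega>\<in>space M. \<bar>X k \<omega>\<bar> \<le> x} - prob {\<omega>\<in>space M. \<bar>X l \<omega>\<bar> \<le> x})
        \<le> prob {\<omega>\<in>space M. abs_min X (I - {l}) \<omega> \<le> x} - prob {\<omega>\<in>space M. abs_min X I \<omega> \<le> x}"
      using prob_abs_max_abs_min_remove_gap[OF indep I symm True] .
    moreover have "0 \<le> prob {\<omega>\<in>space M. \<bar>X k \<omega>\<bar> \<le> x} - prob {\<omega>\<in>space M. \<bar>X l \<omega>\<bar> \<le> x}"
      using kl unfolding stoch_le_def by simp
    ultimately show ?thesis
      by (smt (verit) mult_nonneg_nonneg)
  next
    case False
    then show ?thesis by (simp add: abs_max_def abs_min_def measure_abs_le_negative)
  qed
  then show "prob {\<omega>\<in>space M. abs_max X I \<omega> \<le> x} \<le> prob {\<omega>\<in>space M. abs_max X (I - {l}) \<omega> \<le> x}"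
    and "prob {\<omega>\<in>space M. abs_min X I \<omega> \<le> x} \<le> prob {\<omega>\<in>space M. abs_min X (I - {l}) \<omega> \<le> x}"
    by auto
qed

lemma stoch_lt_abs_max_abs_min_remove:
  fixes X :: "nat \<Rightarrow> 'a \<Rightarrow> real"
  assumes indep: "indep_vars (\<lambda>_. borel) X I" and I: "finite I" "k \<in> I" "l \<in> I" "k \<noteq> l"
    and symm: "\<And>i. i \<in> I \<Longrightarrow> distr M borel (X i) = distr M borel (\<lambda>\<omega>. - X i \<omega>)"
    and kl: "stoch_lt M (\<lambda>\<omega>. \<bar>X k \<omega>\<bar>) (\<lambda>\<omega>. \<bar>X l \<omega>\<bar>)"
  shows "stoch_lt M (abs_max X (I - {l})) (abs_max X I) \<and> stoch_lt M (abs_min X (I - {l})) (abs_min X I)"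
proof -
  obtain x where strict:
    "prob {\<omega>\<in>space M. \<bar>X l \<omega>\<bar> \<le> x} < prob {\<omega>\<in>space M. \<bar>X k \<omega>\<bar> \<le> x}"
    using kl unfolding stoch_lt_def by blast
  have "0 \<le> x"
  proof (rule ccontr)
    assume "\<not> 0 \<le> x"
    then show False using strict by (simp add: measure_abs_le_negative)
  qed
  obtain c where "0 < c"
    and "c * (prob {\<omega>\<in>space M. \<bar>X k \<omega>\<bar> \<le> x} - prob {\<omega>\<in>space M. \<bar>X l \<omega>\<bar> \<le> x})
      \<le> prob {\<omega>\<in>space M. abs_max X (I - {l}) \<omega> \<le> x} - prob {\<omega>\<in>space M. abs_max X I \<omega> \<le> x}"
    and "c * (prob {\<omega>\<in>space M. \<bar>X k \<omega>\<bar> \<le> x} - prob {\<omega>\<in>space M. \<bar>X l \<omega>\<bar> \<le> x})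
      \<le> prob {\<omega>\<in>space M. abs_min X (I - {l}) \<omega> \<le> x} - prob {\<omega>\<in>space M. abs_min X I \<omega> \<le> x}"
    using prob_abs_max_abs_min_remove_gap[OF indep I symm \<open>0 \<le> x\<close>] .
  with strict have
    "prob {\<omega>\<in>space M. abs_max X I \<omega> \<le> x} < prob {\<omega>\<in>space M. abs_max X (I - {l}) \<omega> \<le> x}"
    "prob {\<omega>\<in>space M. abs_min X I \<omega> \<le> x} < prob {\<omega>\<in>space M. abs_min X (I - {l}) \<omega> \<le> x}"
    by (smt (verit) mult_pos_pos)+
  moreover have "stoch_le M (\<lambda>\<omega>. \<bar>X k \<omega>\<bar>) (\<lambda>\<omega>. \<bar>X l \<omega>\<bar>)"
    using kl unfolding stoch_lt_def by blast
  then have "stoch_le M (abs_max X (I - {l})) (abs_max X I) \<and> stoch_le M (abs_min X (I - {l})) (abs_min X I)"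
    using stoch_le_abs_max_abs_min_remove[OF indep I symm] by blast
  ultimately show ?thesis unfolding stoch_lt_def by blast
qed

lemma SIAMX_SIAMN_if_abs_stoch_le_chain:
  fixes X :: "nat \<Rightarrow> 'a \<Rightarrow> real"
  assumes indep: "indep_vars (\<lambda>_. borel) X {1..n}"
    and symm: "\<And>i. i \<in> {1..n} \<Longrightarrow> distr M borel (X i) = distr M borel (\<lambda>\<omega>. - X i \<omega>)"
    and chain: "\<And>i. 1 \<le> i \<Longrightarrow> i < n \<Longrightarrow> stoch_le M (\<lambda>\<omega>. \<bar>X i \<omega>\<bar>) (\<lambda>\<omega>. \<bar>X (i+1) \<omega>\<bar>)"
  shows "SIAMX M X n \<and> SIAMN M X n"
proof -
  have "stoch_le M (abs_max X {1..l-1}) (abs_max X {1..l}) \<and> stoch_le M (abs_min X {1..l-1}) (abs_min X {1..l})"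
    if l: "l \<in> {2..n}" for l
  proof -
    have "{1..l} - {l} = {1..l-1}" using l by auto
    moreover have "stoch_le M (\<lambda>\<omega>. \<bar>X (l-1) \<omega>\<bar>) (\<lambda>\<omega>. \<bar>X l \<omega>\<bar>)"
      using chain[of "l-1"] l by auto
    ultimately show ?thesis
      using stoch_le_abs_max_abs_min_remove[of X "{1..l}" "l-1" l] indep_vars_subset[OF indep] symm l
      by auto
  qed
  then show ?thesis unfolding SIAMX_def SIAMN_def by blast
qed

lemma SSIAMX_SSIAMN_if_abs_stoch_lt_chain:
  fixes X :: "nat \<Rightarrow> 'a \<Rightarrow> real"
  assumes indep: "indep_vars (\<lambda>_. borel) X {1..n}"
    and symm: "\<And>i. i \<in> {1..n} \<Longrightarrow> distr M borel (X i) = distr M borel (\<lambda>\<omega>. - X i \<omega>)"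
    and chain: "\<And>i. 1 \<le> i \<Longrightarrow> i < n \<Longrightarrow> stoch_lt M (\<lambda>\<omega>. \<bar>X i \<omega>\<bar>) (\<lambda>\<omega>. \<bar>X (i+1) \<omega>\<bar>)"
  shows "SSIAMX M X n \<and> SSIAMN M X n"
proof -
  have "stoch_lt M (abs_max X {1..l-1}) (abs_max X {1..l}) \<and> stoch_lt M (abs_min X {1..l-1}) (abs_min X {1..l})"
    if l: "l \<in> {2..n}" for l
  proof -
    have "{1..l} - {l} = {1..l-1}" using l by auto
    moreover have "stoch_lt M (\<lambda>\<omega>. \<bar>X (l-1) \<omega>\<bar>) (\<lambda>\<omega>. \<bar>X l \<omega>\<bar>)"
      using chain[of "l-1"] l by auto
    ultimately show ?thesis
      using stoch_lt_abs_max_abs_min_remove[of X "{1..l}" "l-1" l] indep_vars_subset[OF indep] symm l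
      by auto
  qed
  then show ?thesis unfolding SSIAMX_def SSIAMN_def by blast
qed

end

theorem theorem5p2:
  fixes M :: "'a measure" and X :: "nat \<Rightarrow> 'a \<Rightarrow> real" and n :: nat
  assumes "prob_space M"
    and indep: "prob_space.indep_vars M (\<lambda>_. borel) X {1..n}"
    and symm: "\<And>i. i \<in> {1..n} \<Longrightarrow> distr M borel (X i) = distr M borel (\<lambda>\<omega>. - X i \<omega>)"
  shows
    "(\<forall>k l. 1 \<le> k \<and> k < l \<and> l \<le> n \<and> stoch_le M (\<lambda>\<omega>. \<bar>X k \<omega>\<bar>) (\<lambda>\<omega>. \<bar>X l \<omega>\<bar>) \<longrightarrow>
        stoch_le M (abs_max X ({1..n} - {l})) (abs_max X {1..n}) \<and>
        stoch_le M (abs_min X ({1..n} - {l})) (abs_min X {1..n}))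
   \<and> (\<forall>k l. 1 \<le> k \<and> k < l \<and> l \<le> n \<and> stoch_lt M (\<lambda>\<omega>. \<bar>X k \<omega>\<bar>) (\<lambda>\<omega>. \<bar>X l \<omega>\<bar>) \<longrightarrow>
        stoch_lt M (abs_max X ({1..n} - {l})) (abs_max X {1..n}) \<and>
        stoch_lt M (abs_min X ({1..n} - {l})) (abs_min X {1..n}))
   \<and> ((\<forall>i. 1 \<le> i \<and> i < n \<longrightarrow> stoch_le M (\<lambda>\<omega>. \<bar>X i \<omega>\<bar>) (\<lambda>\<omega>. \<bar>X (i+1) \<omega>\<bar>)) \<longrightarrow>
        SIAMX M X n \<and> SIAMN M X n)
   \<and> ((\<forall>i. 1 \<le> i \<and> i < n \<longrightarrow> stoch_lt M (\<lambda>\<omega>. \<bar>X i \<omega>\<bar>) (\<lambda>\<omega>. \<bar>X (i+1) \<omega>\<bar>)) \<longrightarrow>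
        SSIAMX M X n \<and> SSIAMN M X n)"
proof -
  interpret prob_space M by fact
  have pair: "k \<in> {1..n}" "l \<in> {1..n}" "k \<noteq> l" if "1 \<le> k \<and> k < l \<and> l \<le> n" for k l :: nat
    using that by auto
  show ?thesis
    using stoch_le_abs_max_abs_min_remove[OF indep finite_atLeastAtMost pair symm]
      stoch_lt_abs_max_abs_min_remove[OF indep finite_atLeastAtMost pair symm]
      SIAMX_SIAMN_if_abs_stoch_le_chain[OF indep symm]
      SSIAMX_SSIAMN_if_abs_stoch_lt_chain[OF indep symm]
    by blast
qed

end
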